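(* Fix $\delta>0$. There is a constant $C$, independent of $t$ and $q$, such that for all $t\in[d/2+\delta,1/\delta]$ and $q\ge1$, $$(2t-d)g_1(q)-Cg_2(q)+\log\det K(t,0)\le\log\det K(t,q)\le(2t-d)g_1(q)+Cg_2(q)+\log\det K(t,0),$$ where $g_1(q)=\sum_{k=1}^q(2^{kd}-2^{(k-1)d})(-k\log2)$ and $g_2(q)=(2^{qd}-1)(2t-d)$. Moreover $-g_1(q)\simeq q2^{qd}$.
   Context: $\phi_m(x)=e^{2\pi i\langle m,x\rangle}$ on $\mathbb T^d=[0,1]^d$ (periodic). For $t>d/2$, $K_t(x,y)=\sum_{m\in\mathbb Z^d\setminus\{0\}}(4\pi^2|m|^2)^{-t}\phi_m(x)\overline{\phi_m(y)}$. For $q\ge0$, $J_q=\{0,\dots,2^q-1\}^d$, $x_j=j2^{-q}$, and $K(t,q)$ is the $2^{qd}\times2^{qd}$ Gram matrix $(K_t(x_i,x_j))_{i,j\in J_q}$; in particular $K(t,0)$ is the $1\times1$ matrix $[K_t(0,0)]$. $A\simeq B$ means $C^{-1}B\le A\le CB$ for a constant depending only on $d$ (and $\delta$). *)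

theory Defs
  imports "HOL-Analysis.Analysis"
begin

text \<open>Torus dimension d = CARD('d). Frequencies m are integer vectors int^'d,
points are real vectors real^'d.\<close>

definition ip :: "int ^ 'd \<Rightarrow> real ^ 'd \<Rightarrow> real" where
  "ip m x = (\<Sum>i\<in>UNIV. real_of_int (m $ i) * x $ i)"

definition sqnorm :: "int ^ 'd \<Rightarrow> real" where
  "sqnorm m = (\<Sum>i\<in>UNIV. (real_of_int (m $ i))^2)"

definition phi :: "int ^ 'd \<Rightarrow> real ^ 'd \<Rightarrow> complex" where
  "phi m x = exp (2 * complex_of_real pi * \<i> * complex_of_real (ip m x))"

definition Kt :: "real \<Rightarrow> real ^ 'd \<Rightarrow> real ^ 'd \<Rightarrow> complex" where
  "Kt t x y = infsum (\<lambda>m::int ^ 'd. complex_of_real ((4 * pi^2 * sqnorm m) powr (-t))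
                 * phi m x * cnj (phi m y)) (UNIV - {0})"

definition Jq :: "nat \<Rightarrow> (int ^ 'd) set" where
  "Jq q = {j. \<forall>i. 0 \<le> j $ i \<and> j $ i < 2 ^ q}"

definition gridpt :: "nat \<Rightarrow> int ^ 'd \<Rightarrow> real ^ 'd" where
  "gridpt q j = (\<chi> i. real_of_int (j $ i) / 2 ^ q)"

definition gram :: "real \<Rightarrow> nat \<Rightarrow> int ^ 'd \<Rightarrow> int ^ 'd \<Rightarrow> complex" where
  "gram t q i j = Kt t (gridpt q i) (gridpt q j)"

definition det_on :: "'a set \<Rightarrow> ('a \<Rightarrow> 'a \<Rightarrow> complex) \<Rightarrow> complex" where
  "det_on J M = (\<Sum>p\<in>{p. p permutes J}. of_int (sign p) * (\<Prod>i\<in>J. M i (p i)))"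

text \<open>log det K(t,q). The determinant is real (positive), we take the log of its real part.\<close>
definition logdetK :: "'d::finite itself \<Rightarrow> real \<Rightarrow> nat \<Rightarrow> real" where
  "logdetK _ t q = ln (Re (det_on (Jq q :: (int ^ 'd) set) (gram t q)))"

definition g1 :: "nat \<Rightarrow> nat \<Rightarrow> real" where
  "g1 d q = (\<Sum>k=1..q. (2 ^ (k*d) - 2 ^ ((k-1)*d)) * (- real k * ln 2))"

definition g2 :: "nat \<Rightarrow> real \<Rightarrow> nat \<Rightarrow> real" where
  "g2 d t q = (2 ^ (q*d) - 1) * (2*t - real d)"

end

(*
  The characters \<phi>\<^sub>k, k \<in> J\<^sub>q, diagonalise the Gram matrix K(t,q): on the grid every frequency
  m \<equiv> k (mod 2\<^sup>q) aliases to \<phi>\<^sub>k, so K(t,q) = W diag(\<mu>) W\<^sup>* with W\<^sup>* W = 2\<^sup>q\<^sup>d I and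
  \<mu>\<^sub>k = \<Sum>\<^sub>m\<^sub>\<equiv>\<^sub>k (4\<pi>\<^sup>2|m|\<^sup>2)\<^sup>-\<^sup>t.  Hence log det K(t,q) = 2\<^sup>q\<^sup>d q d log 2 + \<Sum>\<^sub>k log \<mu>\<^sub>k.
  By scaling, \<mu>\<^sub>0 = 2\<^sup>-\<^sup>2\<^sup>t\<^sup>q K\<^sub>t(0,0).  For k \<noteq> 0, \<mu>\<^sub>k lies between its term at the centred
  representative k' of k and a constant multiple of it (the other terms are dominated by an
  Epstein zeta value, uniformly for t \<in> [d/2+\<delta>, 1/\<delta>]), and |k'|\<^sup>2 \<approx> 4\<^sup>l where l is the dyadic
  level of k'.  So log \<mu>\<^sub>k = -2t l log 2 + O(1).  The levels over J\<^sub>q sum to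
  q 2\<^sup>q\<^sup>d - \<Sum>\<^sub>j\<^sub><\<^sub>q 2\<^sup>j\<^sup>d, which produces g\<^sub>1, and the 2\<^sup>q\<^sup>d - 1 bounded errors add up to O(g\<^sub>2).
*)

theory Submission
  imports Defs "Jordan_Normal_Form.Determinant"
begin

(* Jordan_Normal_Form's vector index would otherwise capture the component notation of int ^ 'd. *)
no_notation Matrix.vec_index (infixl "$" 100)

section \<open>Determinants of factorised matrices\<close>

lemma det_on_eq_det_mat:
  fixes M :: "'a \<Rightarrow> 'a \<Rightarrow> complex"
  assumes e: "bij_betw e {0..<n} J"
  shows "det_on J M = det (mat n n (\<lambda>(a,b). M (e a) (e b)))"
proof -
  let ?A = "{0..<n}"
  let ?F = "\<lambda>\<pi> x. if x \<in> J then e (\<pi> (inv_into ?A e x)) else x"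
  have bij: "bij_betw ?F {\<pi>. \<pi> permutes ?A} {\<pi>. \<pi> permutes J}"
    by (rule bij_betw_permutations[OF e])
  have "det (mat n n (\<lambda>(a,b). M (e a) (e b))) =
      (\<Sum>p\<in>{p. p permutes ?A}. of_int (sign p) * (\<Prod>i\<in>?A. M (e i) (e (p i))))"
    by (subst det_def'[of _ n]) (auto intro!: sum.cong prod.cong)
  also have "\<dots> = (\<Sum>p\<in>{p. p permutes ?A}. of_int (sign (?F p)) * (\<Prod>x\<in>J. M x (?F p x)))"
  proof (rule sum.cong[OF refl])
    fix p assume p: "p \<in> {p. p permutes ?A}"
    interpret pb: permutes_bij_finite p ?A J e "inv_into ?A e" "?F p"
      by unfold_locales (use p e in \<open>auto simp: bij_betw_inv_into_left\<close>)
    have "(\<Prod>x\<in>J. M x (?F p x)) = (\<Prod>i\<in>?A. M (e i) (?F p (e i)))"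
      by (rule prod.reindex_bij_betw[OF e, symmetric])
    also have "\<dots> = (\<Prod>i\<in>?A. M (e i) (e (p i)))"
      using e by (intro prod.cong) (auto simp: bij_betw_def bij_betw_inv_into_left)
    finally show "of_int (sign p) * (\<Prod>i\<in>?A. M (e i) (e (p i))) =
       of_int (sign (?F p)) * (\<Prod>x\<in>J. M x (?F p x))"
      using pb.sign_p' by simp
  qed
  also have "\<dots> = det_on J M"
    unfolding det_on_def by (rule sum.reindex_bij_betw[OF bij])
  finally show ?thesis by simp
qed

lemma mat_reindex_mult:
  assumes e: "bij_betw e {0..<n} J"
  shows "mat n n (\<lambda>(a,b). f (e a) (e b)) * mat n n (\<lambda>(a,b). g (e a) (e b)) =
    mat n n (\<lambda>(a,b). \<Sum>k\<in>J. f (e a) k * g k (e b))"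
proof (rule eq_matI)
  fix a b assume "a < dim_row (mat n n (\<lambda>(a,b). \<Sum>k\<in>J. f (e a) k * g k (e b)))"
    and "b < dim_col (mat n n (\<lambda>(a,b). \<Sum>k\<in>J. f (e a) k * g k (e b)))"
  thus "(mat n n (\<lambda>(a,b). f (e a) (e b)) * mat n n (\<lambda>(a,b). g (e a) (e b))) $$ (a, b) =
      mat n n (\<lambda>(a,b). \<Sum>k\<in>J. f (e a) k * g k (e b)) $$ (a, b)"
    using sum.reindex_bij_betw[OF e, of "\<lambda>k. f (e a) k * g k (e b)"]
    by (simp add: scalar_prod_def atLeast0LessThan)
qed auto

lemma det_on_factorization:
  fixes M :: "'a \<Rightarrow> 'a \<Rightarrow> complex"
  assumes fin: "finite J"
    and M: "\<And>x y. x \<in> J \<Longrightarrow> y \<in> J \<Longrightarrow> M x y = (\<Sum>k\<in>J. w x k * \<mu> k * v k y)"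
    and orth: "\<And>k l. k \<in> J \<Longrightarrow> l \<in> J \<Longrightarrow> (\<Sum>y\<in>J. v k y * w y l) = (if k = l then c else 0)"
  shows "det_on J M = c ^ card J * (\<Prod>k\<in>J. \<mu> k)"
proof -
  define n where "n = card J"
  obtain e where e: "bij_betw e {0..<n} J" using ex_bij_betw_nat_finite[OF fin] n_def by blast
  have eJ: "a < n \<Longrightarrow> e a \<in> J" for a using e by (auto simp: bij_betw_def)
  have e_eq: "a < n \<Longrightarrow> b < n \<Longrightarrow> e a = e b \<longleftrightarrow> a = b" for a b
    using e by (auto simp: bij_betw_def inj_on_def)
  let ?m = "\<lambda>F. mat n n (\<lambda>(a,b). F (e a) (e b)) :: complex mat"
  let ?D = "\<lambda>x y. if x = y then \<mu> x else 0"
  have "?m w * ?m ?D = ?m (\<lambda>x y. w x y * \<mu> y)"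
    unfolding mat_reindex_mult[OF e, of w ?D]
    by (rule eq_matI) (simp_all add: eJ if_distrib[of "\<lambda>x. _ * x"] sum.If_cases fin)
  moreover have "?m (\<lambda>x y. w x y * \<mu> y) * ?m v = ?m M"
    unfolding mat_reindex_mult[OF e, of "\<lambda>x y. w x y * \<mu> y" v] by (rule eq_matI) (simp_all add: M eJ)
  ultimately have "?m M = ?m w * ?m ?D * ?m v" by simp
  hence "det_on J M = det (?m w) * det (?m ?D) * det (?m v)"
    by (simp add: det_on_eq_det_mat[OF e] det_mult[of _ n] mult_carrier_mat[of _ n n])
  moreover have "?m v * ?m w = c \<cdot>\<^sub>m 1\<^sub>m n"
    unfolding mat_reindex_mult[OF e] by (rule eq_matI) (auto simp: orth eJ e_eq)
  hence "det (?m v) * det (?m w) = c ^ n"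
    by (simp flip: det_mult[of _ n])
  moreover have "det (?m ?D) = (\<Prod>k\<in>J. \<mu> k)"
  proof -
    have "det (?m ?D) = (\<Prod>a=0..<n. \<mu> (e a))"
      by (subst det_upper_triangular[of _ n])
        (auto simp: upper_triangular_def e_eq prod_list_diag_prod intro!: prod.cong)
    thus ?thesis using prod.reindex_bij_betw[OF e, of \<mu>] by simp
  qed
  ultimately show ?thesis by (simp add: n_def ac_simps)
qed

section \<open>Cubes and the grid \<open>J\<^sub>q\<close>\<close>

definition cube :: "'a set \<Rightarrow> ('a ^ 'n) set" where
  "cube A = {v. \<forall>i. v $ i \<in> A}"

lemma bij_betw_vec_lambda_cube:
  "bij_betw (\<lambda>g. \<chi> i. g i) (PiE UNIV (\<lambda>_. A)) (cube A :: ('a^'n::finite) set)"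
  by (rule bij_betwI[of _ _ _ vec_nth]) (auto simp: cube_def Finite_Cartesian_Product.vec_eq_iff)

lemma finite_cube: "finite A \<Longrightarrow> finite (cube A :: ('a^'n::finite) set)"
  using bij_betw_finite[OF bij_betw_vec_lambda_cube[where A=A and 'n='n]] by (simp add: finite_PiE)

lemma card_cube: "finite A \<Longrightarrow> card (cube A :: ('a^'n::finite) set) = card A ^ CARD('n)"
  using bij_betw_same_card[OF bij_betw_vec_lambda_cube[where A=A and 'n='n]] by (simp add: card_PiE)

lemma sum_cube_prod:
  fixes f :: "'n::finite \<Rightarrow> 'a \<Rightarrow> 'b::comm_semiring_1"
  assumes "finite A"
  shows "(\<Sum>v\<in>(cube A :: ('a^'n) set). \<Prod>i\<in>UNIV. f i (v $ i)) = (\<Prod>i\<in>UNIV. \<Sum>a\<in>A. f i a)"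
proof -
  have "(\<Sum>v\<in>(cube A :: ('a^'n) set). \<Prod>i\<in>UNIV. f i (v $ i)) =
        (\<Sum>g\<in>PiE UNIV (\<lambda>_. A). \<Prod>i\<in>UNIV. f i (g i))"
    by (subst sum.reindex_bij_betw[OF bij_betw_vec_lambda_cube, symmetric]) simp
  also have "\<dots> = (\<Prod>i\<in>UNIV. \<Sum>a\<in>A. f i a)"
    by (rule prod_sum_PiE[symmetric]) (use assms in auto)
  finally show ?thesis .
qed

lemma Jq_eq_cube: "Jq q = cube {0..<(2::int)^q}"
  by (auto simp: Jq_def cube_def)

lemma finite_Jq: "finite (Jq q :: (int^'d::finite) set)"
  by (simp add: Jq_eq_cube finite_cube)

lemma card_Jq: "card (Jq q :: (int^'d::finite) set) = 2 ^ (q * CARD('d))"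
  by (simp add: Jq_eq_cube card_cube power_mult nat_power_eq)

lemma zero_in_Jq: "0 \<in> Jq q"
  by (auto simp: Jq_def)

lemma Jq_0: "Jq 0 = {0}"
proof (intro equalityI subsetI)
  fix x :: "int^'a" assume "x \<in> Jq 0"
  hence "0 \<le> x $ i \<and> x $ i < 1" for i by (simp add: Jq_def)
  hence "x $ i = 0" for i by (metis int_one_le_iff_zero_less linorder_not_less order_antisym_conv)
  thus "x \<in> {0}" by (simp add: Finite_Cartesian_Product.vec_eq_iff)
qed (simp add: Jq_def)

section \<open>Centred residues and dyadic levels\<close>

definition centered :: "nat \<Rightarrow> int \<Rightarrow> int" where
  "centered q a = (if 2 * a \<le> 2 ^ q then a else a - 2 ^ q)"

definition window :: "nat \<Rightarrow> int set" where
  "window j = {x. - (2 ^ j) < 2 * x \<and> 2 * x \<le> 2 ^ j}"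

lemma window_mono: "j \<le> j' \<Longrightarrow> window j \<subseteq> window j'"
proof
  fix x assume "j \<le> j'" "x \<in> window j"
  moreover from \<open>j \<le> j'\<close> have "(2::int) ^ j \<le> 2 ^ j'" by (simp add: power_increasing)
  ultimately show "x \<in> window j'" unfolding window_def mem_Collect_eq by linarith
qed

lemma window_0: "window 0 = {0}"
  by (auto simp: window_def)

lemma card_window: "card (window j) = 2 ^ j"
proof -
  define P where "P = (2::int) ^ j"
  have "P = 1 \<or> P = 2 * (P div 2)"
    by (cases j) (auto simp: P_def)
  hence "window j = {P div 2 - P + 1 .. P div 2}"
    unfolding window_def P_def[symmetric] by auto
  thus ?thesis by (simp add: P_def nat_power_eq)
qed

lemma power2_two_power: "(2 ^ j)\<^sup>2 = (4::'a::comm_semiring_1) ^ j"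
  by (simp add: power2_eq_square flip: power_mult_distrib)

lemma sq_le_of_in_window:
  assumes "x \<in> window j"
  shows "(2 * real_of_int x)\<^sup>2 \<le> 4 ^ j"
proof -
  have "\<bar>2 * x\<bar> \<le> 2 ^ j" using assms by (auto simp: window_def)
  hence "\<bar>2 * x\<bar>\<^sup>2 \<le> (2 ^ j)\<^sup>2" by (rule power_mono) simp
  hence "real_of_int ((2 * x)\<^sup>2) \<le> real_of_int (4 ^ j)"
    by (simp only: power2_abs power2_two_power of_int_le_iff)
  thus ?thesis by simp
qed

lemma sq_ge_of_not_in_window:
  assumes "x \<notin> window j"
  shows "4 ^ j \<le> (2 * real_of_int x)\<^sup>2"
proof -
  have "2 ^ j \<le> \<bar>2 * x\<bar>" using assms by (auto simp: window_def)
  hence "(2 ^ j)\<^sup>2 \<le> \<bar>2 * x\<bar>\<^sup>2" by (rule power_mono) simp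
  hence "real_of_int (4 ^ j) \<le> real_of_int ((2 * x)\<^sup>2)"
    by (simp only: power2_abs power2_two_power of_int_le_iff)
  thus ?thesis by simp
qed

lemma centered_in_window: "0 \<le> a \<Longrightarrow> a < 2 ^ q \<Longrightarrow> centered q a \<in> window q"
  by (auto simp: window_def centered_def)

lemma bij_betw_centered: "bij_betw (centered q) {0..<2 ^ q} (window q)"
proof (rule bij_betw_imageI)
  show "inj_on (centered q) {0..<2 ^ q}"
    by (auto simp: inj_on_def centered_def split: if_splits)
  show "centered q ` {0..<2 ^ q} = window q"
  proof (intro equalityI subsetI)
    fix x assume "x \<in> window q"
    let ?a = "if 0 \<le> x then x else x + 2 ^ q"
    have "x = centered q ?a" "?a \<in> {0..<2 ^ q}"
      using \<open>x \<in> window q\<close> by (auto simp: window_def centered_def)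
    thus "x \<in> centered q ` {0..<2 ^ q}" by (rule image_eqI)
  qed (auto intro: centered_in_window)
qed

lemma centered_mod: "0 \<le> a \<Longrightarrow> a < 2 ^ q \<Longrightarrow> centered q a mod 2 ^ q = a"
  by (auto simp: centered_def)

lemma centered_eq_0_iff: "0 \<le> a \<Longrightarrow> a < 2 ^ q \<Longrightarrow> centered q a = 0 \<longleftrightarrow> a = 0"
  by (auto simp: centered_def)

lemma card_centered_in_window:
  assumes "j \<le> q"
  shows "card {a \<in> {0..<(2::int) ^ q}. centered q a \<in> window j} = 2 ^ j"
proof -
  note bij = bij_betw_centered[of q]
  have "centered q ` {a \<in> {0..<2 ^ q}. centered q a \<in> window j} = window j"
  proof (intro equalityI subsetI)
    fix x assume "x \<in> window j"
    hence "x \<in> centered q ` {0..<2 ^ q}"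
      using window_mono[OF assms] bij by (auto simp: bij_betw_def)
    with \<open>x \<in> window j\<close> show "x \<in> centered q ` {a \<in> {0..<2 ^ q}. centered q a \<in> window j}"
      by blast
  qed auto
  moreover have "inj_on (centered q) {a \<in> {0..<2 ^ q}. centered q a \<in> window j}"
    using bij by (auto simp: bij_betw_def inj_on_def)
  ultimately show ?thesis by (simp flip: card_image add: card_window)
qed

definition dyadic_level :: "int ^ 'd \<Rightarrow> nat" where
  "dyadic_level v = (LEAST j. \<forall>i. v $ i \<in> window j)"

lemma dyadic_level_le: "\<forall>i. v $ i \<in> window n \<Longrightarrow> dyadic_level v \<le> n"
  unfolding dyadic_level_def by (rule Least_le)

lemma in_window_dyadic_level: "\<forall>i. v $ i \<in> window n \<Longrightarrow> \<forall>i. v $ i \<in> window (dyadic_level v)"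
  unfolding dyadic_level_def by (rule LeastI)

lemma in_window_above_dyadic_level:
  assumes "\<forall>i. v $ i \<in> window n" and "dyadic_level v \<le> j"
  shows "v $ i \<in> window j"
  using subsetD[OF window_mono[OF assms(2)]] in_window_dyadic_level[OF assms(1)] by simp

lemma not_in_window_below_dyadic_level:
  "j < dyadic_level v \<Longrightarrow> \<exists>i. v $ i \<notin> window j"
  unfolding dyadic_level_def using not_less_Least by blast

lemma dyadic_level_0: "dyadic_level 0 = 0"
  by (simp add: dyadic_level_def window_0)

lemma sqnorm_nonneg: "0 \<le> sqnorm m"
  by (simp add: sqnorm_def sum_nonneg)

lemma sq_le_sqnorm: "(real_of_int (m $ i))\<^sup>2 \<le> sqnorm m"
  unfolding sqnorm_def by (rule member_le_sum) auto

lemma sqnorm_ge_1: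
  fixes m :: "int ^ 'd::finite"
  assumes "m \<noteq> 0"
  shows "1 \<le> sqnorm m"
proof -
  obtain i where "m $ i \<noteq> 0"
    using assms by (auto simp: Finite_Cartesian_Product.vec_eq_iff)
  hence "1 \<le> (m $ i)\<^sup>2" by (simp add: int_one_le_iff_zero_less)
  hence "real_of_int 1 \<le> real_of_int ((m $ i)\<^sup>2)" by (simp only: of_int_le_iff)
  hence "1 \<le> (real_of_int (m $ i))\<^sup>2" by simp
  also have "\<dots> \<le> sqnorm m" by (rule sq_le_sqnorm)
  finally show ?thesis .
qed

lemma four_sqnorm_le_of_window:
  fixes v :: "int ^ 'd::finite"
  assumes "\<forall>i. v $ i \<in> window j"
  shows "4 * sqnorm v \<le> real CARD('d) * 4 ^ j"
proof -
  have "4 * sqnorm v = (\<Sum>i\<in>UNIV. (2 * real_of_int (v $ i))\<^sup>2)"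
    by (simp add: sqnorm_def sum_distrib_left power_mult_distrib)
  also have "\<dots> \<le> (\<Sum>i\<in>(UNIV::'d set). 4 ^ j)"
    using assms by (intro sum_mono sq_le_of_in_window) simp
  finally show ?thesis by simp
qed

lemma sqnorm_dyadic_level_bounds:
  fixes v :: "int ^ 'd::finite"
  assumes n: "\<forall>i. v $ i \<in> window n" and v: "v \<noteq> 0"
  shows "4 ^ dyadic_level v \<le> 16 * sqnorm v"
    and "4 * sqnorm v \<le> real CARD('d) * 4 ^ dyadic_level v"
proof -
  let ?l = "dyadic_level v"
  have "?l \<noteq> 0"
  proof
    assume "?l = 0"
    hence "v $ i = 0" for i using in_window_dyadic_level[OF n, rule_format, of i] by (simp add: window_0)
    with v show False by (simp add: Finite_Cartesian_Product.vec_eq_iff)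
  qed
  then obtain i where i: "v $ i \<notin> window (?l - 1)"
    using not_in_window_below_dyadic_level[of "?l - 1" v] by auto
  have "4 ^ ?l = 4 * 4 ^ (?l - 1)" using \<open>?l \<noteq> 0\<close> by (cases ?l) simp_all
  also have "\<dots> \<le> 4 * (2 * real_of_int (v $ i))\<^sup>2"
    using sq_ge_of_not_in_window[OF i] by simp
  also have "\<dots> \<le> 16 * sqnorm v" using sq_le_sqnorm[of v i] by (simp add: power_mult_distrib)
  finally show "4 ^ ?l \<le> 16 * sqnorm v" .
  show "4 * sqnorm v \<le> real CARD('d) * 4 ^ ?l"
    by (rule four_sqnorm_le_of_window[OF in_window_dyadic_level[OF n]])
qed

definition centered_vec :: "nat \<Rightarrow> int ^ 'd \<Rightarrow> int ^ 'd" where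
  "centered_vec q k = (\<chi> i. centered q (k $ i))"

lemma centered_vec_in_window: "k \<in> Jq q \<Longrightarrow> \<forall>i. centered_vec q k $ i \<in> window q"
  by (simp add: centered_vec_def Jq_def centered_in_window)

lemma centered_vec_mod: "k \<in> Jq q \<Longrightarrow> centered_vec q k $ i mod 2 ^ q = k $ i"
  by (simp add: centered_vec_def Jq_def centered_mod)

lemma centered_vec_0: "centered_vec q 0 = 0"
  by (simp add: centered_vec_def centered_def Finite_Cartesian_Product.vec_eq_iff)

lemma centered_vec_eq_0_iff: "k \<in> Jq q \<Longrightarrow> centered_vec q k = 0 \<longleftrightarrow> k = 0"
  unfolding Finite_Cartesian_Product.vec_eq_iff
  by (simp add: centered_vec_def Jq_def centered_eq_0_iff)

lemma card_Jq_centered_in_window: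
  assumes "j \<le> q"
  shows "card {k \<in> (Jq q :: (int^'d::finite) set). \<forall>i. centered_vec q k $ i \<in> window j} =
    2 ^ (j * CARD('d))"
proof -
  let ?A = "{a \<in> {0..<(2::int) ^ q}. centered q a \<in> window j}"
  have "{k \<in> (Jq q :: (int^'d) set). \<forall>i. centered_vec q k $ i \<in> window j} = cube ?A"
    by (simp add: Jq_def cube_def centered_vec_def all_conj_distrib)
  hence "card {k \<in> (Jq q :: (int^'d) set). \<forall>i. centered_vec q k $ i \<in> window j} =
      card (cube ?A :: (int^'d) set)"
    by (simp only:)
  also have "\<dots> = card ?A ^ CARD('d)"
    by (rule card_cube, rule finite_subset[of _ "{0..<2 ^ q}"]) auto
  also have "\<dots> = 2 ^ (j * CARD('d))"
    by (simp only: card_centered_in_window[OF assms] power_mult)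
  finally show ?thesis .
qed

lemma dyadic_level_eq_card:
  assumes "k \<in> Jq q"
  shows "dyadic_level (centered_vec q k) = card {j \<in> {..<q}. \<not> (\<forall>i. centered_vec q k $ i \<in> window j)}"
proof -
  let ?v = "centered_vec q k"
  note win = centered_vec_in_window[OF assms]
  have "j < q \<and> \<not> (\<forall>i. ?v $ i \<in> window j) \<longleftrightarrow> j < dyadic_level ?v" for j
  proof
    assume j: "j < q \<and> \<not> (\<forall>i. ?v $ i \<in> window j)"
    show "j < dyadic_level ?v"
    proof (rule ccontr)
      assume "\<not> j < dyadic_level ?v"
      hence "\<forall>i. ?v $ i \<in> window j"
        by (intro allI in_window_above_dyadic_level[OF win]) simp
      with j show False by simp
    qed
  next
    assume "j < dyadic_level ?v"
    thus "j < q \<and> \<not> (\<forall>i. ?v $ i \<in> window j)"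
      using not_in_window_below_dyadic_level[of j ?v] dyadic_level_le[OF win] by simp
  qed
  hence "{j \<in> {..<q}. \<not> (\<forall>i. ?v $ i \<in> window j)} = {..<dyadic_level ?v}"
    by auto
  thus ?thesis by simp
qed

lemma sum_dyadic_level:
  "(\<Sum>k\<in>(Jq q :: (int^'d::finite) set). real (dyadic_level (centered_vec q k))) =
     real q * 2 ^ (q * CARD('d)) - (\<Sum>j<q. 2 ^ (j * CARD('d)))"
proof -
  let ?J = "Jq q :: (int^'d::finite) set"
  let ?P = "\<lambda>k j. \<forall>i. centered_vec q k $ i \<in> window j"
  have level: "real (dyadic_level (centered_vec q k)) = (\<Sum>j<q. 1 - of_bool (?P k j))"
    if "k \<in> ?J" for k
  proof -
    have "(\<Sum>j<q. 1 - of_bool (?P k j) :: real) = (\<Sum>j<q. of_bool (\<not> ?P k j))"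
      by (simp only: of_bool_not_iff)
    also have "\<dots> = real (card ({..<q} \<inter> {j. \<not> ?P k j}))"
      by (intro sum_of_bool_eq finite_lessThan)
    also have "{..<q} \<inter> {j. \<not> ?P k j} = {j \<in> {..<q}. \<not> ?P k j}"
      by blast
    finally show ?thesis by (simp only: dyadic_level_eq_card[OF that])
  qed
  have "(\<Sum>k\<in>?J. real (dyadic_level (centered_vec q k))) = (\<Sum>k\<in>?J. \<Sum>j<q. 1 - of_bool (?P k j))"
    by (rule sum.cong) (simp_all add: level)
  also have "\<dots> = (\<Sum>j<q. \<Sum>k\<in>?J. 1 - of_bool (?P k j))"
    by (rule sum.swap)
  also have "\<dots> = (\<Sum>j<q. 2 ^ (q * CARD('d)) - 2 ^ (j * CARD('d)) :: real)"
  proof (intro sum.cong refl)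
    fix j assume "j \<in> {..<q}"
    have "(\<Sum>k\<in>?J. of_bool (?P k j)) = real (card {k \<in> ?J. ?P k j})"
      by (subst sum_of_bool_eq) (simp_all add: finite_Jq Collect_conj_eq)
    thus "(\<Sum>k\<in>?J. 1 - of_bool (?P k j)) = 2 ^ (q * CARD('d)) - (2 ^ (j * CARD('d)) :: real)"
      using \<open>j \<in> {..<q}\<close> by (simp add: sum_subtractf card_Jq card_Jq_centered_in_window)
  qed
  finally show ?thesis by (simp add: sum_subtractf)
qed

section \<open>Lattice sums\<close>

lemma sum_one_plus_sq_powr_le:
  fixes a :: real
  assumes a: "a > 1/2"
  shows "(\<Sum>x\<in>{- int R..int R}. (1 + (real_of_int x)\<^sup>2) powr (-a))
           \<le> 1 + 2 * (\<Sum>n. real n powr (- (2*a)))"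
proof -
  define f where "f x = (1 + (real_of_int x)\<^sup>2) powr (-a)" for x :: int
  have f_le: "f (int n) \<le> real n powr (- (2*a))" "f (- int n) \<le> real n powr (- (2*a))"
    if "n \<ge> 1" for n
  proof -
    have "(1 + (real n)\<^sup>2) powr (-a) \<le> ((real n)\<^sup>2) powr (-a)"
      using that a by (intro powr_mono2') auto
    also have "\<dots> = real n powr (- (2*a))"
      by (simp add: powr_powr flip: powr_numeral)
    finally show "f (int n) \<le> real n powr (- (2*a))" "f (- int n) \<le> real n powr (- (2*a))"
      by (simp_all add: f_def)
  qed
  have tail: "(\<Sum>n\<in>{1..R}. real n powr (- (2*a))) \<le> (\<Sum>n. real n powr (- (2*a)))"
    using a by (intro sum_le_suminf) (auto simp: summable_real_powr_iff)
  have "{- int R..int R} = insert 0 (int ` {1..R} \<union> (\<lambda>n. - int n) ` {1..R})"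
  proof (intro equalityI subsetI)
    fix x assume "x \<in> {- int R..int R}"
    thus "x \<in> insert 0 (int ` {1..R} \<union> (\<lambda>n. - int n) ` {1..R})"
      by (cases "x > 0"; cases "x = 0")
        (auto intro!: image_eqI[of x int "nat x"] image_eqI[of x "\<lambda>n. - int n" "nat (- x)"])
  qed auto
  hence "(\<Sum>x\<in>{- int R..int R}. f x) = f 0 + (\<Sum>x\<in>int ` {1..R} \<union> (\<lambda>n. - int n) ` {1..R}. f x)"
    by (simp only:) (rule sum.insert, auto)
  also have "\<dots> = f 0 + (\<Sum>x\<in>int ` {1..R}. f x) + (\<Sum>x\<in>(\<lambda>n. - int n) ` {1..R}. f x)"
    by (subst sum.union_disjoint) auto
  also have "\<dots> = f 0 + (\<Sum>n\<in>{1..R}. f (int n)) + (\<Sum>n\<in>{1..R}. f (- int n))"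
    by (simp add: sum.reindex inj_on_def)
  also have "\<dots> \<le> 1 + (\<Sum>n. real n powr (- (2*a))) + (\<Sum>n. real n powr (- (2*a)))"
    using tail f_le by (intro add_mono order.trans[OF sum_mono tail]) (auto simp: f_def)
  finally show ?thesis by (simp add: f_def)
qed

lemma sqnorm_powr_le_prod:
  fixes m :: "int ^ 'd::finite"
  assumes m: "m \<noteq> 0" and s: "s > 0"
  shows "sqnorm m powr (-s) \<le> 2 powr s * (\<Prod>i\<in>UNIV. (1 + (real_of_int (m $ i))\<^sup>2) powr (- (s / CARD('d))))"
proof -
  let ?d = "real CARD('d)"
  have sq1: "sqnorm m \<ge> 1" by (rule sqnorm_ge_1[OF m])
  have "(\<Prod>i\<in>UNIV. 1 + (real_of_int (m $ i))\<^sup>2) \<le> (\<Prod>i\<in>(UNIV::'d set). 2 * sqnorm m)"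
  proof (rule prod_mono)
    fix i
    show "0 \<le> 1 + (real_of_int (m $ i))\<^sup>2 \<and> 1 + (real_of_int (m $ i))\<^sup>2 \<le> 2 * sqnorm m"
      using sq1 sq_le_sqnorm[of m i] by (simp add: add_nonneg_nonneg)
  qed
  also have "\<dots> = (2 * sqnorm m) powr ?d"
    using sq1 by (simp add: powr_realpow)
  finally have P: "(\<Prod>i\<in>UNIV. 1 + (real_of_int (m $ i))\<^sup>2) \<le> (2 * sqnorm m) powr ?d" .
  have "(2 * sqnorm m) powr (-s) = ((2 * sqnorm m) powr ?d) powr (- (s / ?d))"
    by (simp add: powr_powr)
  also have "\<dots> \<le> (\<Prod>i\<in>UNIV. 1 + (real_of_int (m $ i))\<^sup>2) powr (- (s / ?d))"
    using P s by (intro powr_mono2') (auto intro!: prod_pos add_pos_nonneg)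
  also have "\<dots> = (\<Prod>i\<in>UNIV. (1 + (real_of_int (m $ i))\<^sup>2) powr (- (s / ?d)))"
    by (rule prod_powr_distrib)
  finally show ?thesis
    using sq1 by (simp add: powr_mult powr_minus field_simps)
qed

text \<open>By \<open>sqnorm_powr_le_prod\<close>, every finite partial sum is dominated by a product of \<open>d\<close>
  convergent one-dimensional sums.\<close>

lemma summable_on_sqnorm_powr:
  assumes s: "s > real CARD('d) / 2"
  shows "(\<lambda>m::int^'d::finite. sqnorm m powr (-s)) summable_on (UNIV - {0})"
proof (rule nonneg_bdd_above_summable_on)
  let ?d = "real CARD('d)"
  define a where "a = s / ?d"
  have spos: "s > 0" using s of_nat_0_le_iff[of "CARD('d)"] by linarith
  have a: "a > 1/2" using s by (simp add: a_def field_simps)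
  define H where "H = 1 + 2 * (\<Sum>n. real n powr (- (2*a)))"
  define g where "g m = (\<Prod>i\<in>UNIV. (1 + (real_of_int (m $ i))\<^sup>2) powr (- a))" for m :: "int^'d"
  show "bdd_above (sum (\<lambda>m::int^'d. sqnorm m powr (-s)) ` {F. F \<subseteq> UNIV - {0} \<and> finite F})"
  proof (rule bdd_aboveI2)
    fix F :: "(int^'d) set" assume F: "F \<in> {F. F \<subseteq> UNIV - {0} \<and> finite F}"
    define R where "R = (\<Sum>m\<in>F. \<Sum>i\<in>UNIV. nat \<bar>m $ i\<bar>)"
    let ?B = "cube {- int R..int R} :: (int^'d) set"
    have "m $ i \<in> {- int R..int R}" if "m \<in> F" for m i
    proof -
      have "nat \<bar>m $ i\<bar> \<le> (\<Sum>i\<in>UNIV. nat \<bar>m $ i\<bar>)" by (rule member_le_sum) auto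
      also have "\<dots> \<le> R" unfolding R_def using F that by (intro member_le_sum) auto
      finally show ?thesis by simp linarith
    qed
    hence "F \<subseteq> ?B" by (auto simp: cube_def)
    hence "(\<Sum>m\<in>F. sqnorm m powr (-s)) \<le> (\<Sum>m\<in>F. 2 powr s * g m)"
      using F by (intro sum_mono) (auto simp: a_def g_def intro!: sqnorm_powr_le_prod spos)
    also have "\<dots> \<le> (\<Sum>m\<in>?B. 2 powr s * g m)"
      using \<open>F \<subseteq> ?B\<close>
      by (intro sum_mono2) (auto simp: g_def intro!: finite_cube mult_nonneg_nonneg prod_nonneg)
    also have "\<dots> = 2 powr s * (\<Sum>m\<in>?B. g m)"
      by (simp add: sum_distrib_left)
    also have "\<dots> = 2 powr s *
        (\<Prod>i\<in>(UNIV::'d set). \<Sum>x\<in>{- int R..int R}. (1 + (real_of_int x)\<^sup>2) powr (- a))"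
      unfolding g_def by (subst sum_cube_prod) simp_all
    also have "\<dots> \<le> 2 powr s * (\<Prod>i\<in>(UNIV::'d set). H)"
      unfolding H_def using a
      by (intro mult_left_mono prod_mono conjI sum_nonneg sum_one_plus_sq_powr_le) auto
    finally show "(\<Sum>m\<in>F. sqnorm m powr (-s)) \<le> 2 powr s * H ^ CARD('d)" by simp
  qed
qed simp

section \<open>Discrete Fourier analysis on the grid\<close>

definition e2pi :: "real \<Rightarrow> complex" where
  "e2pi r = exp (2 * complex_of_real pi * \<i> * complex_of_real r)"

lemma phi_eq_e2pi: "phi m x = e2pi (ip m x)"
  by (simp add: phi_def e2pi_def)

lemma e2pi_add: "e2pi (a + b) = e2pi a * e2pi b"
  by (simp add: e2pi_def distrib_left exp_add[symmetric])

lemma e2pi_0: "e2pi 0 = 1"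
  by (simp add: e2pi_def)

lemma e2pi_of_int: "e2pi (of_int n) = 1"
proof -
  have "e2pi (of_int n) = exp ((2 * of_int n * pi) * \<i>)" by (simp add: e2pi_def ac_simps)
  also have "\<dots> = 1" by (rule exp_integer_2pi) simp
  finally show ?thesis .
qed

lemma cnj_e2pi: "cnj (e2pi r) = e2pi (- r)"
  by (simp add: e2pi_def exp_cnj)

lemma e2pi_power: "e2pi r ^ n = e2pi (real n * r)"
  by (simp add: e2pi_def exp_of_nat_mult[symmetric] ac_simps)

lemma e2pi_sum: "finite A \<Longrightarrow> e2pi (\<Sum>x\<in>A. f x) = (\<Prod>x\<in>A. e2pi (f x))"
  by (induction A rule: finite_induct) (auto simp: e2pi_add e2pi_0)

lemma e2pi_eq_1_imp_Ints: "e2pi r = 1 \<Longrightarrow> r \<in> \<int>"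
proof -
  assume "e2pi r = 1"
  then obtain n :: int where "Im (2 * complex_of_real pi * \<i> * complex_of_real r) = of_int (2 * n) * pi"
    unfolding e2pi_def exp_eq_1 by blast
  hence "r = of_int n" by simp
  thus ?thesis by simp
qed

lemma sum_e2pi_period:
  fixes r :: int
  assumes "\<bar>r\<bar> < 2 ^ q"
  shows "(\<Sum>a\<in>{0..<(2::int) ^ q}. e2pi (real_of_int (r * a) / 2 ^ q)) = (if r = 0 then 2 ^ q else 0)"
proof -
  define N :: nat where "N = 2 ^ q"
  define z where "z = e2pi (real_of_int r / 2 ^ q)"
  have "{0..<(2::int) ^ q} = int ` {..<N}"
    by (simp add: N_def atLeast0LessThan[symmetric] image_int_atLeastLessThan)
  hence "(\<Sum>a\<in>{0..<(2::int) ^ q}. e2pi (real_of_int (r * a) / 2 ^ q)) = (\<Sum>n<N. z ^ n)"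
    by (simp add: sum.reindex z_def e2pi_power ac_simps)
  also have "\<dots> = (if r = 0 then 2 ^ q else 0)"
  proof (cases "r = 0")
    case True
    thus ?thesis by (simp add: z_def e2pi_0 N_def)
  next
    case False
    have "z \<noteq> 1"
    proof
      assume "z = 1"
      then obtain n :: int where "real_of_int r / 2 ^ q = of_int n"
        unfolding z_def using e2pi_eq_1_imp_Ints Ints_cases by metis
      hence "real_of_int r = real_of_int (n * 2 ^ q)" by (simp add: field_simps)
      hence r: "r = n * 2 ^ q" by (simp only: of_int_eq_iff)
      with False have "n \<noteq> 0" by auto
      hence "1 * 2 ^ q \<le> \<bar>n\<bar> * (2::int) ^ q" by (intro mult_right_mono) auto
      with r assms show False by (simp add: abs_mult)
    qed
    moreover have "z ^ N = 1"
      by (simp add: z_def e2pi_power N_def e2pi_of_int)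
    ultimately show ?thesis using False by (simp add: sum_gp_strict)
  qed
  finally show ?thesis .
qed

lemma ip_gridpt: "ip m (gridpt q y) = (\<Sum>i\<in>UNIV. real_of_int (m $ i * y $ i) / 2 ^ q)"
  by (simp add: ip_def gridpt_def)

lemma cnj_phi_mult_phi_gridpt:
  "cnj (phi k (gridpt q y)) * phi l (gridpt q y)
     = (\<Prod>i\<in>UNIV. e2pi (real_of_int ((l $ i - k $ i) * y $ i) / 2 ^ q))"
proof -
  have "cnj (phi k (gridpt q y)) * phi l (gridpt q y) = e2pi (ip l (gridpt q y) - ip k (gridpt q y))"
    by (simp add: phi_eq_e2pi cnj_e2pi e2pi_add[symmetric])
  also have "ip l (gridpt q y) - ip k (gridpt q y) =
      (\<Sum>i\<in>UNIV. real_of_int ((l $ i - k $ i) * y $ i) / 2 ^ q)"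
    by (simp add: ip_gridpt sum_subtractf[symmetric] diff_divide_distrib left_diff_distrib)
  finally show ?thesis by (simp add: e2pi_sum)
qed

lemma sum_gridpt_cnj_phi_mult_phi:
  fixes k l :: "int ^ 'd::finite"
  assumes k: "k \<in> Jq q" and l: "l \<in> Jq q"
  shows "(\<Sum>y\<in>Jq q. cnj (phi k (gridpt q y)) * phi l (gridpt q y)) =
    (if k = l then 2 ^ (q * CARD('d)) else 0)"
proof -
  have "(\<Sum>y\<in>Jq q. cnj (phi k (gridpt q y)) * phi l (gridpt q y))
      = (\<Prod>i\<in>UNIV. \<Sum>a\<in>{0..<(2::int) ^ q}. e2pi (real_of_int ((l $ i - k $ i) * a) / 2 ^ q))"
    unfolding cnj_phi_mult_phi_gridpt Jq_eq_cube by (rule sum_cube_prod) simp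
  also have "\<dots> = (\<Prod>i\<in>(UNIV::'d set). if l $ i - k $ i = 0 then 2 ^ q else 0)"
  proof (rule prod.cong[OF refl])
    fix i
    have "0 \<le> k $ i" "k $ i < 2 ^ q" "0 \<le> l $ i" "l $ i < 2 ^ q" using k l by (auto simp: Jq_def)
    hence "\<bar>l $ i - k $ i\<bar> < 2 ^ q" by linarith
    thus "(\<Sum>a\<in>{0..<(2::int) ^ q}. e2pi (real_of_int ((l $ i - k $ i) * a) / 2 ^ q)) =
        (if l $ i - k $ i = 0 then 2 ^ q else 0)"
      by (rule sum_e2pi_period)
  qed
  also have "\<dots> = (if k = l then 2 ^ (q * CARD('d)) else 0)"
  proof (cases "k = l")
    case False
    then obtain i where "l $ i - k $ i \<noteq> 0"
      by (metis Finite_Cartesian_Product.vec_eq_iff eq_iff_diff_eq_0)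
    hence "(\<Prod>i\<in>(UNIV::'d set). if l $ i - k $ i = 0 then (2::complex) ^ q else 0) = 0"
      by (intro prod_zero bexI[of _ i]) simp_all
    thus ?thesis using False by simp
  qed (simp add: power_mult)
  finally show ?thesis .
qed

section \<open>Diagonalisation of the Gram matrix\<close>

definition kernel_coef :: "real \<Rightarrow> int ^ 'd \<Rightarrow> real" where
  "kernel_coef t m = (4 * pi\<^sup>2 * sqnorm m) powr (-t)"

definition residue_class :: "nat \<Rightarrow> int ^ 'd \<Rightarrow> (int ^ 'd) set" where
  "residue_class q k = {m. m \<noteq> 0 \<and> (\<forall>i. m $ i mod 2 ^ q = k $ i)}"

text \<open>On the grid \<open>J\<^sub>q\<close> all frequencies congruent to \<open>k\<close> modulo \<open>2\<^sup>q\<close> alias to \<open>\<phi>\<^sub>k\<close>,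
  so \<open>eig t q k\<close> is the eigenvalue of \<open>K(t,q)\<close> belonging to that character.\<close>

definition eig :: "real \<Rightarrow> nat \<Rightarrow> int ^ 'd \<Rightarrow> real" where
  "eig t q k = infsum (kernel_coef t) (residue_class q k)"

definition epstein_zeta :: "'d::finite itself \<Rightarrow> real \<Rightarrow> real" where
  "epstein_zeta _ s = infsum (\<lambda>m::int ^ 'd. sqnorm m powr (-s)) (UNIV - {0})"

lemma epstein_zeta_nonneg: "0 \<le> epstein_zeta TYPE('d::finite) s"
  by (simp add: epstein_zeta_def infsum_nonneg)

lemma kernel_coef_nonneg: "0 \<le> kernel_coef t m"
  by (simp add: kernel_coef_def)

lemma kernel_coef_pos: "m \<noteq> 0 \<Longrightarrow> 0 < kernel_coef t (m :: int ^ 'd::finite)"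
  using sqnorm_ge_1[of m] by (simp add: kernel_coef_def)

lemma summable_on_kernel_coef:
  assumes "t > real CARD('d) / 2"
  shows "(kernel_coef t :: int ^ 'd::finite \<Rightarrow> real) summable_on (UNIV - {0})"
proof -
  have "kernel_coef t = (\<lambda>m::int^'d. (4 * pi\<^sup>2) powr (-t) * sqnorm m powr (-t))"
    unfolding kernel_coef_def by (intro ext powr_mult)
  thus ?thesis
    using summable_on_cmult_right[OF summable_on_sqnorm_powr[OF assms]] by simp
qed

lemma summable_on_kernel_coef_residue_class:
  assumes "t > real CARD('d) / 2"
  shows "(kernel_coef t :: int ^ 'd::finite \<Rightarrow> real) summable_on residue_class q k"
  by (rule summable_on_subset_banach[OF summable_on_kernel_coef[OF assms]]) (auto simp: residue_class_def)

lemma kernel_coef_le_eig: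
  assumes "t > real CARD('d) / 2" and "m \<in> residue_class q k"
  shows "kernel_coef t m \<le> eig t q (k :: int ^ 'd::finite)"
proof -
  have "kernel_coef t m = infsum (kernel_coef t) {m}" by simp
  also have "\<dots> \<le> eig t q k"
    unfolding eig_def using assms
    by (intro infsum_mono2) (auto simp: summable_on_kernel_coef_residue_class kernel_coef_nonneg)
  finally show ?thesis .
qed

lemma eig_pos:
  assumes "t > real CARD('d) / 2" and "k \<in> Jq q"
  shows "0 < eig t q (k :: int ^ 'd::finite)"
proof -
  let ?m = "\<chi> i. k $ i + 2 ^ q"
  have "?m $ i > 0" for i using assms(2) by (auto simp: Jq_def intro: add_nonneg_pos)
  hence "?m \<noteq> 0" by (metis less_irrefl zero_index)
  moreover have "?m \<in> residue_class q k"
    using assms(2) \<open>?m \<noteq> 0\<close> by (simp add: residue_class_def Jq_def)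
  ultimately show ?thesis
    using kernel_coef_pos kernel_coef_le_eig[OF assms(1)] by (metis order.strict_trans2)
qed

lemma Union_residue_class: "(\<Union>k\<in>Jq q. residue_class q k) = (UNIV - {0} :: (int ^ 'd::finite) set)"
proof (intro equalityI subsetI)
  fix m :: "int^'d" assume "m \<in> UNIV - {0}"
  hence "m \<in> residue_class q (\<chi> i. m $ i mod 2 ^ q)" "(\<chi> i. m $ i mod 2 ^ q) \<in> Jq q"
    by (auto simp: residue_class_def Jq_def)
  thus "m \<in> (\<Union>k\<in>Jq q. residue_class q k)" by blast
qed (auto simp: residue_class_def)

lemma residue_class_disjoint: "k \<noteq> l \<Longrightarrow> residue_class q k \<inter> residue_class q (l :: int ^ 'd) = {}"
  by (auto simp: residue_class_def Finite_Cartesian_Product.vec_eq_iff)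

lemma phi_gridpt_mod:
  assumes "\<forall>i. m $ i mod 2 ^ q = k $ i"
  shows "phi m (gridpt q y) = phi k (gridpt q y)"
proof -
  have m: "m $ i = k $ i + 2 ^ q * (m $ i div 2 ^ q)" for i
    using assms by (metis add.commute div_mult_mod_eq mult.commute)
  have "ip m (gridpt q y) =
      (\<Sum>i\<in>UNIV. real_of_int (k $ i * y $ i) / 2 ^ q + real_of_int ((m $ i div 2 ^ q) * y $ i))"
    unfolding ip_gridpt by (intro sum.cong refl, subst m) (simp add: field_simps)
  hence "ip m (gridpt q y) = ip k (gridpt q y) + of_int (\<Sum>i\<in>UNIV. (m $ i div 2 ^ q) * y $ i)"
    by (simp add: ip_gridpt sum.distrib)
  thus ?thesis by (simp only: phi_eq_e2pi e2pi_add e2pi_of_int mult_1_right)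
qed

lemma gram_eq_sum_eig:
  assumes t: "t > real CARD('d) / 2"
  shows "gram t q x y = (\<Sum>k\<in>(Jq q :: (int ^ 'd::finite) set).
    phi k (gridpt q x) * complex_of_real (eig t q k) * cnj (phi k (gridpt q y)))"
proof -
  let ?c = "\<lambda>k. phi k (gridpt q x) * cnj (phi k (gridpt q y))"
  let ?F = "\<lambda>m::int^'d.
    complex_of_real (kernel_coef t m) * phi m (gridpt q x) * cnj (phi m (gridpt q y))"
  have F_eq: "?F m = complex_of_real (kernel_coef t m) * ?c k"
    if "m \<in> residue_class q k" for m k :: "int^'d"
    using that phi_gridpt_mod[of m q k] by (auto simp: residue_class_def)
  have sums: "infsum (\<lambda>m. complex_of_real (kernel_coef t m)) (residue_class q k) =
      complex_of_real (eig t q k)"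
    for k :: "int^'d"
    unfolding eig_def
    by (intro infsumI has_sum_of_real has_sum_infsum summable_on_kernel_coef_residue_class[OF t])
  have summable: "?F summable_on residue_class q k" for k :: "int^'d"
    using summable_on_cmult_left[OF summable_on_of_real[OF summable_on_kernel_coef_residue_class[OF t]],
        of "?c k"]
    by (subst summable_on_cong[OF F_eq])
  have "gram t q x y = infsum ?F (\<Union>k\<in>Jq q. residue_class q k)"
    by (simp add: gram_def Kt_def Union_residue_class kernel_coef_def)
  also have "\<dots> = (\<Sum>k\<in>Jq q. infsum ?F (residue_class q k))"
    by (rule sum_infsum[symmetric]) (auto simp: finite_Jq summable residue_class_disjoint)
  also have "\<dots> = (\<Sum>k\<in>Jq q. complex_of_real (eig t q k) * ?c k)"
    by (intro sum.cong refl) (simp add: infsum_cong[OF F_eq] infsum_cmult_left' sums)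
  finally show ?thesis by (simp add: ac_simps)
qed

lemma det_gram:
  assumes t: "t > real CARD('d) / 2"
  shows "det_on (Jq q :: (int ^ 'd::finite) set) (gram t q) =
     (2 ^ (q * CARD('d))) ^ (2 ^ (q * CARD('d))) *
       (\<Prod>k\<in>(Jq q :: (int ^ 'd) set). complex_of_real (eig t q k))"
  using det_on_factorization[OF finite_Jq gram_eq_sum_eig[OF t] sum_gridpt_cnj_phi_mult_phi]
  by (simp add: card_Jq)

lemma logdetK_eq_sum_ln_eig:
  assumes t: "t > real CARD('d) / 2"
  shows "logdetK TYPE('d::finite) t q =
    2 ^ (q * CARD('d)) * (real (q * CARD('d)) * ln 2) + (\<Sum>k\<in>(Jq q :: (int ^ 'd) set). ln (eig t q k))"
proof -
  let ?N = "2 ^ (q * CARD('d)) :: nat"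
  have pos: "\<And>k::int^'d. k \<in> Jq q \<Longrightarrow> 0 < eig t q k" by (rule eig_pos[OF t])
  have "logdetK TYPE('d) t q = ln (real ?N ^ ?N * (\<Prod>k\<in>(Jq q :: (int ^ 'd) set). eig t q k))"
    by (simp add: logdetK_def det_gram[OF t] flip: of_real_prod)
  also have "\<dots> = ?N * (real (q * CARD('d)) * ln 2) + (\<Sum>k\<in>(Jq q :: (int ^ 'd) set). ln (eig t q k))"
    using pos by (simp add: ln_mult ln_realpow ln_prod finite_Jq prod_pos less_imp_neq[symmetric])
  finally show ?thesis by simp
qed

section \<open>Size of the eigenvalues\<close>

lemma sqnorm_smult: "sqnorm (c *s n) = (real_of_int c)\<^sup>2 * sqnorm n"
  by (simp add: sqnorm_def sum_distrib_left power_mult_distrib)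

lemma kernel_coef_smult:
  assumes "c > 0"
  shows "kernel_coef t (c *s n) = real_of_int c powr (-2 * t) * kernel_coef t n"
proof -
  have "kernel_coef t (c *s n) = ((real_of_int c)\<^sup>2 * (4 * pi\<^sup>2 * sqnorm n)) powr (-t)"
    by (simp add: kernel_coef_def sqnorm_smult ac_simps)
  also have "\<dots> = ((real_of_int c)\<^sup>2) powr (-t) * kernel_coef t n"
    unfolding kernel_coef_def by (rule powr_mult)
  also have "((real_of_int c)\<^sup>2) powr (-t) = real_of_int c powr (-2 * t)"
    using assms by (simp add: powr_powr flip: powr_numeral)
  finally show ?thesis .
qed

lemma congruence_class_eq_range:
  fixes v k :: "int ^ 'd"
  assumes "\<forall>i. v $ i mod 2 ^ q = k $ i"
  shows "{m. \<forall>i. m $ i mod 2 ^ q = k $ i} = range (\<lambda>n. v + (2 ^ q) *s n)"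
proof (intro equalityI subsetI)
  fix m assume "m \<in> {m. \<forall>i. m $ i mod 2 ^ q = k $ i}"
  hence "m $ i mod 2 ^ q = v $ i mod 2 ^ q" for i using assms by simp
  hence "2 ^ q dvd m $ i - v $ i" for i by (simp only: mod_eq_dvd_iff)
  hence "m = v + (2 ^ q) *s (\<chi> i. (m $ i - v $ i) div 2 ^ q)"
    by (simp add: Finite_Cartesian_Product.vec_eq_iff)
  thus "m \<in> range (\<lambda>n. v + (2 ^ q) *s n)" by (rule range_eqI)
next
  fix m assume "m \<in> range (\<lambda>n. v + (2 ^ q) *s n)"
  then obtain n where "m = v + (2 ^ q) *s n" by blast
  thus "m \<in> {m. \<forall>i. m $ i mod 2 ^ q = k $ i}" using assms by simp
qed

lemma eig_eq_infsum_shift: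
  fixes k v :: "int ^ 'd::finite"
  assumes "\<forall>i. v $ i mod 2 ^ q = k $ i" and "k \<noteq> 0"
  shows "eig t q k = infsum (\<lambda>n. kernel_coef t (v + (2 ^ q) *s n)) UNIV"
proof -
  have "0 \<notin> {m. \<forall>i. m $ i mod 2 ^ q = k $ i}"
    using assms(2) by (simp add: Finite_Cartesian_Product.vec_eq_iff)
  hence "residue_class q k = {m. \<forall>i. m $ i mod 2 ^ q = k $ i}"
    unfolding residue_class_def by blast
  also have "\<dots> = range (\<lambda>n. v + (2 ^ q) *s n)"
    by (rule congruence_class_eq_range[OF assms(1)])
  finally have "eig t q k = infsum (kernel_coef t) (range (\<lambda>n. v + (2 ^ q) *s n))"
    by (simp only: eig_def)
  also have "\<dots> = infsum (kernel_coef t \<circ> (\<lambda>n. v + (2 ^ q) *s n)) UNIV"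
    by (rule infsum_reindex) (auto simp: inj_on_def Finite_Cartesian_Product.vec_eq_iff)
  finally show ?thesis by (simp only: comp_def)
qed

lemma eig_zero: "eig t q (0 :: int ^ 'd::finite) = (2 ^ q) powr (-2 * t) * eig t 0 (0 :: int ^ 'd)"
proof -
  let ?s = "\<lambda>n::int^'d. (2 ^ q) *s n"
  have inj: "inj ?s" by (auto simp: inj_def Finite_Cartesian_Product.vec_eq_iff)
  have "residue_class q (0 :: int ^ 'd) = range ?s - {0}"
    using congruence_class_eq_range[of "0::int^'d" q 0] by (auto simp: residue_class_def)
  also have "\<dots> = ?s ` (UNIV - {0})"
    using image_set_diff[OF inj, of UNIV "{0}"] by simp
  finally have "eig t q (0 :: int ^ 'd) = infsum (kernel_coef t) (?s ` (UNIV - {0}))"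
    unfolding eig_def by (rule arg_cong)
  also have "\<dots> = infsum (kernel_coef t \<circ> ?s) (UNIV - {0})"
    by (rule infsum_reindex) (rule inj_on_subset[OF inj], simp)
  also have "\<dots> = infsum (\<lambda>n. (2 ^ q) powr (-2 * t) * kernel_coef t n) (UNIV - {0 :: int ^ 'd})"
    by (intro infsum_cong) (simp add: kernel_coef_smult)
  also have "\<dots> = (2 ^ q) powr (-2 * t) * infsum (kernel_coef t) (UNIV - {0 :: int ^ 'd})"
    by (rule infsum_cmult_right')
  also have "UNIV - {0} = residue_class 0 (0 :: int ^ 'd)" by (auto simp: residue_class_def)
  finally show ?thesis by (simp only: eig_def)
qed

lemma sq_shift_ge:
  assumes "x \<in> window q"
  shows "4 ^ q * (real_of_int y)\<^sup>2 \<le> (2 * real_of_int (x + 2 ^ q * y))\<^sup>2"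
proof (cases "y = 0")
  case False
  define P where "P = 2 ^ q * real_of_int y"
  have "\<bar>2 * x\<bar> \<le> 2 ^ q" using assms by (auto simp: window_def)
  hence "real_of_int \<bar>2 * x\<bar> \<le> real_of_int (2 ^ q)" by (simp only: of_int_le_iff)
  hence "\<bar>2 * real_of_int x\<bar> \<le> 2 ^ q" by simp
  moreover have "2 ^ q \<le> \<bar>P\<bar>"
    using False by (simp add: P_def abs_mult)
  ultimately have "\<bar>P\<bar> \<le> \<bar>2 * real_of_int x + 2 * P\<bar>" by linarith
  hence "P\<^sup>2 \<le> (2 * real_of_int x + 2 * P)\<^sup>2" by (simp only: abs_le_square_iff)
  moreover have "4 ^ q * (real_of_int y)\<^sup>2 = P\<^sup>2"
    by (simp add: P_def power_mult_distrib power2_two_power)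
  moreover have "2 * real_of_int (x + 2 ^ q * y) = 2 * real_of_int x + 2 * P"
    by (simp add: P_def)
  ultimately show ?thesis by simp
qed simp

lemma sqnorm_shift_ge:
  fixes v n :: "int ^ 'd::finite"
  assumes "\<forall>i. v $ i \<in> window q"
  shows "4 ^ q * sqnorm n \<le> 4 * sqnorm (v + (2 ^ q) *s n)"
proof -
  have "4 ^ q * sqnorm n = (\<Sum>i\<in>UNIV. 4 ^ q * (real_of_int (n $ i))\<^sup>2)"
    by (simp add: sqnorm_def sum_distrib_left)
  also have "\<dots> \<le> (\<Sum>i\<in>UNIV. (2 * real_of_int (v $ i + 2 ^ q * n $ i))\<^sup>2)"
    using assms by (intro sum_mono sq_shift_ge) simp
  also have "\<dots> = 4 * sqnorm (v + (2 ^ q) *s n)"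
    by (simp add: sqnorm_def sum_distrib_left power2_eq_square algebra_simps)
  finally show ?thesis .
qed

lemma kernel_coef_shift_le:
  fixes v n :: "int ^ 'd::finite"
  assumes v: "v \<noteq> 0" "\<forall>i. v $ i \<in> window q" and n: "n \<noteq> 0"
    and s: "0 \<le> s" "s \<le> t" "t \<le> T"
  shows "kernel_coef t (v + (2 ^ q) *s n) \<le>
    kernel_coef t v * (real CARD('d) powr T * sqnorm n powr (-s))"
proof -
  let ?d = "real CARD('d)"
  have sv: "1 \<le> sqnorm v" and sn: "1 \<le> sqnorm n" using sqnorm_ge_1 v(1) n by auto
  have "4 * pi\<^sup>2 * (sqnorm v * sqnorm n / ?d) = pi\<^sup>2 * (4 * sqnorm v / ?d) * sqnorm n"
    by simp
  also have "\<dots> \<le> pi\<^sup>2 * 4 ^ q * sqnorm n"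
    using four_sqnorm_le_of_window[OF v(2)] sn
    by (intro mult_right_mono mult_left_mono) (simp_all add: divide_le_eq mult.commute)
  also have "\<dots> \<le> 4 * pi\<^sup>2 * sqnorm (v + (2 ^ q) *s n)"
    using sqnorm_shift_ge[OF v(2), of n] by simp
  finally have "kernel_coef t (v + (2 ^ q) *s n) \<le> (4 * pi\<^sup>2 * (sqnorm v * sqnorm n / ?d)) powr (-t)"
    unfolding kernel_coef_def using sv sn s by (intro powr_mono2') auto
  also have "\<dots> = kernel_coef t v * (?d powr t * sqnorm n powr (-t))"
    unfolding kernel_coef_def using sv sn
    by (simp add: powr_mult powr_divide powr_minus_divide mult_ac)
  also have "\<dots> \<le> kernel_coef t v * (?d powr T * sqnorm n powr (-s))"
    using s sn by (intro mult_left_mono mult_mono powr_mono) (simp_all add: kernel_coef_nonneg)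
  finally show ?thesis .
qed

lemma eig_le_kernel_coef_centered_vec:
  fixes k :: "int ^ 'd::finite"
  assumes k: "k \<in> Jq q" "k \<noteq> 0" and s: "real CARD('d) / 2 < s" "s \<le> t" "t \<le> T"
  shows "eig t q k \<le>
    kernel_coef t (centered_vec q k) * (1 + real CARD('d) powr T * epstein_zeta TYPE('d) s)"
proof -
  let ?v = "centered_vec q k" and ?d = "real CARD('d)"
  let ?Z = "\<lambda>n::int ^ 'd. sqnorm n powr (-s)"
  define h where "h n = (if n = 0 then 1 else ?d powr T * ?Z n)" for n :: "int ^ 'd"
  have "0 \<le> s" using s(1) of_nat_0_le_iff[of "CARD('d)"] by linarith
  have "((\<lambda>n. ?d powr T * ?Z n) has_sum ?d powr T * epstein_zeta TYPE('d) s) (UNIV - {0})"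
    unfolding epstein_zeta_def
    by (intro has_sum_cmult_right has_sum_infsum summable_on_sqnorm_powr[OF s(1)])
  hence "(h has_sum ?d powr T * epstein_zeta TYPE('d) s) (UNIV - {0})"
    by (subst has_sum_cong[of _ h]) (simp_all add: h_def)
  hence "(h has_sum h 0 + ?d powr T * epstein_zeta TYPE('d) s) (insert 0 (UNIV - {0}))"
    by (intro has_sum_insert) simp_all
  hence h_sum: "(h has_sum 1 + ?d powr T * epstein_zeta TYPE('d) s) UNIV"
    by (simp add: h_def insert_Diff)
  have bound: "kernel_coef t (?v + (2 ^ q) *s n) \<le> kernel_coef t ?v * h n" for n
  proof (cases "n = 0")
    case False
    have "?v \<noteq> 0" using centered_vec_eq_0_iff[OF k(1)] k(2) by simp
    from kernel_coef_shift_le[OF this centered_vec_in_window[OF k(1)] False \<open>0 \<le> s\<close> s(2,3)]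
    show ?thesis using False by (simp add: h_def)
  qed (simp add: h_def)
  have hs: "(\<lambda>n. kernel_coef t ?v * h n) summable_on UNIV"
    by (rule summable_on_cmult_right) (rule has_sum_imp_summable[OF h_sum])
  have "(\<lambda>n. kernel_coef t (?v + (2 ^ q) *s n)) summable_on UNIV"
    by (rule summable_on_comparison_test[OF hs]) (simp_all only: bound kernel_coef_nonneg)
  have "eig t q k = infsum (\<lambda>n. kernel_coef t (?v + (2 ^ q) *s n)) UNIV"
    by (rule eig_eq_infsum_shift) (auto simp: centered_vec_mod[OF k(1)] k(2))
  also have "\<dots> \<le> infsum (\<lambda>n. kernel_coef t ?v * h n) UNIV"
    by (rule infsum_mono[OF \<open>(\<lambda>n. kernel_coef t (?v + (2 ^ q) *s n)) summable_on UNIV\<close> hs bound])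
  also have "\<dots> = kernel_coef t ?v * (1 + ?d powr T * epstein_zeta TYPE('d) s)"
    using h_sum by (simp add: infsum_cmult_right' infsumI)
  finally show ?thesis .
qed

lemma ln_sqnorm_centered_vec_bounds:
  fixes k :: "int ^ 'd::finite"
  assumes k: "k \<in> Jq q" "k \<noteq> 0"
  defines "l \<equiv> real (dyadic_level (centered_vec q k))"
  shows "2 * l * ln 2 \<le> ln (4 * pi\<^sup>2 * sqnorm (centered_vec q k))"
    and "ln (4 * pi\<^sup>2 * sqnorm (centered_vec q k)) \<le> ln (pi\<^sup>2 * CARD('d)) + 2 * l * ln 2"
proof -
  let ?v = "centered_vec q k"
  have v: "?v \<noteq> 0" using centered_vec_eq_0_iff[OF k(1)] k(2) by simp
  note win = centered_vec_in_window[OF k(1)]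
  have pos: "0 < 4 * pi\<^sup>2 * sqnorm ?v" using sqnorm_ge_1[OF v] by simp
  have ln_4_pow: "ln (4 ^ dyadic_level ?v) = 2 * l * ln 2"
    by (simp add: l_def ln_realpow flip: power2_two_power)
  have "(4::real) ^ dyadic_level ?v \<le> 16 * sqnorm ?v"
    by (rule sqnorm_dyadic_level_bounds(1)[OF win v])
  also have "\<dots> \<le> 4 * pi\<^sup>2 * sqnorm ?v"
    using mult_mono[of 2 pi 2 pi] pi_gt3 sqnorm_nonneg[of ?v]
    by (intro mult_right_mono) (simp_all add: power2_eq_square)
  finally show "2 * l * ln 2 \<le> ln (4 * pi\<^sup>2 * sqnorm ?v)"
    using pos by (simp flip: ln_4_pow)
  have "4 * pi\<^sup>2 * sqnorm ?v \<le> pi\<^sup>2 * CARD('d) * 4 ^ dyadic_level ?v"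
    using sqnorm_dyadic_level_bounds(2)[OF win v] by simp
  hence "ln (4 * pi\<^sup>2 * sqnorm ?v) \<le> ln (pi\<^sup>2 * CARD('d) * 4 ^ dyadic_level ?v)"
    using pos by simp
  also have "\<dots> = ln (pi\<^sup>2 * CARD('d)) + 2 * l * ln 2"
    by (simp add: ln_mult flip: ln_4_pow)
  finally show "ln (4 * pi\<^sup>2 * sqnorm ?v) \<le> ln (pi\<^sup>2 * CARD('d)) + 2 * l * ln 2" .
qed

lemma ln_eig_bounds:
  fixes k :: "int ^ 'd::finite"
  assumes k: "k \<in> Jq q" "k \<noteq> 0" and s: "real CARD('d) / 2 < s" "s \<le> t" "t \<le> T"
  defines "l \<equiv> real (dyadic_level (centered_vec q k))"
  shows "- t * ln (pi\<^sup>2 * CARD('d)) \<le> ln (eig t q k) + 2 * t * l * ln 2"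
    and "ln (eig t q k) + 2 * t * l * ln 2 \<le> ln (1 + real CARD('d) powr T * epstein_zeta TYPE('d) s)"
proof -
  let ?v = "centered_vec q k"
  define A where "A = 1 + real CARD('d) powr T * epstein_zeta TYPE('d) s"
  define x where "x = 4 * pi\<^sup>2 * sqnorm ?v"
  have v: "?v \<noteq> 0" using centered_vec_eq_0_iff[OF k(1)] k(2) by simp
  have "0 < x" using sqnorm_ge_1[OF v] by (simp add: x_def)
  have t: "t > real CARD('d) / 2" using s by linarith
  hence "0 \<le> t" using of_nat_0_le_iff[of "CARD('d)"] by linarith
  have kernel_coef_v_pos: "0 < kernel_coef t ?v" by (rule kernel_coef_pos[OF v])
  have ln_kernel_coef: "ln (kernel_coef t ?v) = - t * ln x"
    using \<open>0 < x\<close> by (simp add: kernel_coef_def x_def)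
  have "kernel_coef t ?v \<le> eig t q k"
    using t v centered_vec_mod[OF k(1)] by (intro kernel_coef_le_eig) (simp_all add: residue_class_def)
  hence "- t * ln x \<le> ln (eig t q k)"
    using ln_mono kernel_coef_v_pos ln_kernel_coef by metis
  moreover have "ln (eig t q k) \<le> - t * ln x + ln A"
  proof -
    have "1 \<le> A" using epstein_zeta_nonneg[where 'd='d] by (simp add: A_def)
    have "ln (eig t q k) \<le> ln (kernel_coef t ?v * A)"
      using \<open>kernel_coef t ?v \<le> eig t q k\<close> kernel_coef_v_pos
      by (intro ln_mono eig_le_kernel_coef_centered_vec[OF k s, folded A_def]) simp
    also have "\<dots> = - t * ln x + ln A"
      using kernel_coef_v_pos \<open>1 \<le> A\<close> by (simp add: ln_mult ln_kernel_coef)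
    finally show ?thesis .
  qed
  moreover have "t * (2 * l * ln 2) \<le> t * ln x" "t * ln x \<le> t * (ln (pi\<^sup>2 * CARD('d)) + 2 * l * ln 2)"
    using \<open>0 \<le> t\<close> ln_sqnorm_centered_vec_bounds[OF k, folded l_def x_def]
    by (simp_all add: mult_left_mono)
  ultimately show "- t * ln (pi\<^sup>2 * CARD('d)) \<le> ln (eig t q k) + 2 * t * l * ln 2"
    and "ln (eig t q k) + 2 * t * l * ln 2 \<le> ln A"
    by (simp_all add: algebra_simps)
qed

section \<open>The log-determinant\<close>

lemma g1_eq: "g1 d q = - ln 2 * (real q * 2 ^ (q * d) - (\<Sum>j<q. 2 ^ (j * d)))"
proof (induction q)
  case (Suc q)
  have "g1 d (Suc q) = g1 d q + (2 ^ (Suc q * d) - 2 ^ (q * d)) * (- real (Suc q) * ln 2)"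
    unfolding g1_def by (subst sum.cl_ivl_Suc) (simp del: of_nat_Suc)
  thus ?case
    using Suc.IH by (simp del: of_nat_Suc add: algebra_simps) (simp add: algebra_simps)
qed (simp add: g1_def)

lemma sum_two_power_le:
  assumes "d \<ge> 1"
  shows "(\<Sum>j<q. (2::real) ^ (j * d)) \<le> 2 ^ (q * d) - 1"
proof (induction q)
  case (Suc q)
  have "(2::real) ^ 1 \<le> 2 ^ d" using assms by (intro power_increasing) simp_all
  hence "2 * 2 ^ (q * d) \<le> (2::real) ^ (Suc q * d)"
    by (simp add: power_add mult_right_mono)
  thus ?case using Suc.IH by simp
qed simp

lemma real_le_two_power_minus_1:
  assumes "d \<ge> 1"
  shows "real q \<le> 2 ^ (q * d) - 1"
proof -
  have "real q + 1 \<le> 2 ^ q"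
    by (induction q) simp_all
  moreover have "(2::real) ^ q \<le> 2 ^ (q * d)" using assms by (intro power_increasing) simp_all
  ultimately show ?thesis by linarith
qed

lemma neg_g1_bounds:
  assumes "q \<ge> 1" and "d \<ge> 1"
  shows "ln 2 / 2 * (real q * 2 ^ (q * d)) \<le> - g1 d q"
    and "- g1 d q \<le> ln 2 * (real q * 2 ^ (q * d))"
proof -
  define N :: real where "N = 2 ^ (q * d)"
  define G :: real where "G = (\<Sum>j<q. 2 ^ (j * d))"
  have g1: "- g1 d q = ln 2 * (real q * N - G)" by (simp add: g1_eq N_def G_def)
  have "(2::real) ^ 1 \<le> N" unfolding N_def using assms by (intro power_increasing) simp_all
  moreover have "G \<le> N - 1" unfolding G_def N_def by (rule sum_two_power_le[OF assms(2)])
  ultimately have "G \<le> real q * N / 2"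
  proof (cases "q = 1")
    case False
    hence "2 * N \<le> real q * N" using assms(1) \<open>2 ^ 1 \<le> N\<close> by (intro mult_right_mono) simp_all
    thus ?thesis using \<open>G \<le> N - 1\<close> by simp
  qed (simp add: G_def)
  hence "ln 2 * G \<le> ln 2 * (real q * N / 2)" by (intro mult_left_mono) simp_all
  hence "ln 2 / 2 * (real q * N) \<le> ln 2 * (real q * N - G)"
    by (simp only: right_diff_distrib)
  thus "ln 2 / 2 * (real q * 2 ^ (q * d)) \<le> - g1 d q"
    by (simp only: g1 N_def)
  have "0 \<le> ln 2 * G" by (simp add: G_def sum_nonneg)
  thus "- g1 d q \<le> ln 2 * (real q * 2 ^ (q * d))"
    unfolding g1 N_def[symmetric] by (simp add: algebra_simps)
qed

lemma logdetK_0: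
  assumes "t > real CARD('d) / 2"
  shows "logdetK TYPE('d::finite) t 0 = ln (eig t 0 (0 :: int ^ 'd))"
  using logdetK_eq_sum_ln_eig[OF assms, of 0] by (simp add: Jq_0)

lemma logdetK_diff_eq:
  assumes t: "t > real CARD('d) / 2"
  shows "logdetK TYPE('d::finite) t q - logdetK TYPE('d) t 0 - (2 * t - CARD('d)) * g1 CARD('d) q =
    real CARD('d) * ln 2 * (\<Sum>j<q. 2 ^ (j * CARD('d))) - 2 * t * q * ln 2 +
    (\<Sum>k\<in>(Jq q :: (int ^ 'd) set) - {0}. ln (eig t q k) + 2 * t * dyadic_level (centered_vec q k) * ln 2)"
proof -
  let ?J = "(Jq q :: (int ^ 'd) set) - {0}" and ?d = "real CARD('d)"
  let ?N = "2 ^ (q * CARD('d)) :: real" and ?G = "\<Sum>j<q. 2 ^ (j * CARD('d)) :: real"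
  let ?l = "\<lambda>k. real (dyadic_level (centered_vec q k))"
  have "0 < eig t 0 (0 :: int ^ 'd)" using eig_pos[OF t, of 0 0] by (simp add: Jq_0)
  hence "ln (eig t q (0 :: int ^ 'd)) = ln ((2 ^ q) powr (-2 * t)) + logdetK TYPE('d) t 0"
    by (simp add: eig_zero[of t q] ln_mult logdetK_0[OF t])
  also have "ln ((2 ^ q) powr (-2 * t) :: real) = - 2 * t * q * ln 2"
    by (simp add: ln_powr ln_realpow)
  finally have logdetK_q: "logdetK TYPE('d) t q =
      ?N * (q * ?d * ln 2) - 2 * t * q * ln 2 + logdetK TYPE('d) t 0 + (\<Sum>k\<in>?J. ln (eig t q k))"
    using logdetK_eq_sum_ln_eig[OF t, of q]
      sum.remove[OF finite_Jq zero_in_Jq, of "\<lambda>k::int ^ 'd. ln (eig t q k)" q]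
    by simp
  have sum_level: "(\<Sum>k\<in>?J. ?l k) = q * ?N - ?G"
    using sum_dyadic_level[where 'd='d, of q]
      sum.remove[OF finite_Jq zero_in_Jq, of "\<lambda>k::int ^ 'd. real (dyadic_level (centered_vec q k))" q]
    by (simp add: centered_vec_0 dyadic_level_0)
  have sum_e: "(\<Sum>k\<in>?J. ln (eig t q k) + 2 * t * ?l k * ln 2) =
      (\<Sum>k\<in>?J. ln (eig t q k)) + 2 * t * ln 2 * (\<Sum>k\<in>?J. ?l k)"
    by (simp add: sum.distrib sum_distrib_left mult_ac)
  show ?thesis
    unfolding logdetK_q sum_e sum_level g1_eq by (simp add: algebra_simps)
qed

lemma ln_pi_sq_card_nonneg: "0 \<le> ln (pi\<^sup>2 * real CARD('d::finite))"
proof -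
  have "2\<^sup>2 \<le> pi\<^sup>2" using pi_ge_two by (intro power_mono) simp_all
  hence "1 * 1 \<le> pi\<^sup>2 * real CARD('d)" by (intro mult_mono) simp_all
  thus ?thesis by simp
qed

lemma abs_logdetK_diff_le:
  fixes \<delta> t :: real
  assumes \<delta>: "\<delta> > 0" and t: "real CARD('d) / 2 + \<delta> \<le> t" "t \<le> 1 / \<delta>"
  defines "B \<equiv> ln (pi\<^sup>2 * CARD('d)) / \<delta> +
    ln (1 + real CARD('d) powr (1 / \<delta>) * epstein_zeta TYPE('d) (real CARD('d) / 2 + \<delta>))"
  shows "\<bar>logdetK TYPE('d::finite) t q - logdetK TYPE('d) t 0 - (2 * t - CARD('d)) * g1 CARD('d) q\<bar>
    \<le> (CARD('d) * ln 2 + 2 * ln 2 / \<delta> + B) * (2 ^ (q * CARD('d)) - 1)"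
proof -
  let ?d = "real CARD('d)" and ?J = "(Jq q :: (int ^ 'd) set) - {0}"
  let ?N = "2 ^ (q * CARD('d)) :: real" and ?G = "\<Sum>j<q. 2 ^ (j * CARD('d)) :: real"
  let ?e = "\<lambda>k :: int ^ 'd. ln (eig t q k) + 2 * t * dyadic_level (centered_vec q k) * ln 2"
  have "?d / 2 < t" using \<delta> t by linarith
  have e_le: "\<bar>?e k\<bar> \<le> B" if "k \<in> ?J" for k
  proof -
    have "t * ln (pi\<^sup>2 * ?d) \<le> ln (pi\<^sup>2 * ?d) / \<delta>"
      using mult_right_mono[OF t(2) ln_pi_sq_card_nonneg[where 'd='d]] by simp
    moreover have "0 \<le> ln (1 + ?d powr (1 / \<delta>) * epstein_zeta TYPE('d) (?d / 2 + \<delta>))"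
      using epstein_zeta_nonneg[where 'd='d] by simp
    moreover have "0 \<le> ln (pi\<^sup>2 * ?d) / \<delta>" using ln_pi_sq_card_nonneg[where 'd='d] \<delta> by simp
    ultimately show ?thesis
      using ln_eig_bounds[of k q "?d / 2 + \<delta>" t "1 / \<delta>"] that \<delta> t
      unfolding B_def abs_le_iff by auto
  qed
  have "\<bar>\<Sum>k\<in>?J. ?e k\<bar> \<le> (\<Sum>k\<in>?J. \<bar>?e k\<bar>)" by (rule sum_abs)
  also have "\<dots> \<le> (\<Sum>k\<in>?J. B)" using e_le by (rule sum_mono)
  also have "\<dots> = (?N - 1) * B"
    by (simp add: finite_Jq card_Jq zero_in_Jq card_Diff_singleton)
  finally have "\<bar>\<Sum>k\<in>?J. ?e k\<bar> \<le> (?N - 1) * B" .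
  moreover have "0 \<le> ?d * ln 2 * ?G" "?d * ln 2 * ?G \<le> ?d * ln 2 * (?N - 1)"
    using sum_two_power_le[of "CARD('d)" q] by (simp_all add: sum_nonneg)
  moreover have "0 \<le> 2 * t * q * ln 2" using \<open>?d / 2 < t\<close> by simp
  moreover have "2 * t * q * ln 2 \<le> 2 * ln 2 * ((?N - 1) / \<delta>)"
  proof -
    have "t * q \<le> 1 / \<delta> * (?N - 1)"
      using t(2) real_le_two_power_minus_1[of "CARD('d)" q] \<open>?d / 2 < t\<close> \<delta>
      by (intro mult_mono) simp_all
    hence "2 * ln 2 * (t * q) \<le> 2 * ln 2 * ((?N - 1) / \<delta>)"
      by (intro mult_left_mono) simp_all
    thus ?thesis by (simp add: mult_ac)
  qed
  ultimately show ?thesis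
    unfolding logdetK_diff_eq[OF \<open>?d / 2 < t\<close>] by (simp add: abs_le_iff algebra_simps)
qed

lemma logdetK_bounds:
  fixes \<delta> :: real
  assumes \<delta>: "\<delta> > 0"
  shows "\<exists>C::real. \<forall>t q. real CARD('d) / 2 + \<delta> \<le> t \<and> t \<le> 1 / \<delta> \<and> q \<ge> 1 \<longrightarrow>
            (2*t - real CARD('d)) * g1 CARD('d) q - C * g2 CARD('d) t q + logdetK TYPE('d::finite) t 0
              \<le> logdetK TYPE('d) t q
          \<and> logdetK TYPE('d) t q
              \<le> (2*t - real CARD('d)) * g1 CARD('d) q + C * g2 CARD('d) t q + logdetK TYPE('d) t 0"
proof -
  let ?d = "real CARD('d)"
  define B where "B = ln (pi\<^sup>2 * ?d) / \<delta> +
    ln (1 + ?d powr (1 / \<delta>) * epstein_zeta TYPE('d) (?d / 2 + \<delta>))"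
  define K where "K = ?d * ln 2 + 2 * ln 2 / \<delta> + B"
  have "0 \<le> K"
    using \<delta> ln_pi_sq_card_nonneg[where 'd='d] epstein_zeta_nonneg[where 'd='d]
    by (simp add: K_def B_def)
  show ?thesis
  proof (intro exI[of _ "K / (2 * \<delta>)"] allI impI)
    fix t :: real and q :: nat
    assume tq: "?d / 2 + \<delta> \<le> t \<and> t \<le> 1 / \<delta> \<and> q \<ge> 1"
    hence t: "?d / 2 + \<delta> \<le> t" "t \<le> 1 / \<delta>" by simp_all
    have "K * (2 ^ (q * CARD('d)) - 1) = K / (2 * \<delta>) * ((2 ^ (q * CARD('d)) - 1) * (2 * \<delta>))"
      using \<delta> by simp
    also have "\<dots> \<le> K / (2 * \<delta>) * ((2 ^ (q * CARD('d)) - 1) * (2 * t - ?d))"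
      using tq \<delta> \<open>0 \<le> K\<close> by (intro mult_left_mono) simp_all
    finally have "K * (2 ^ (q * CARD('d)) - 1) \<le> K / (2 * \<delta>) * g2 CARD('d) t q"
      by (simp add: g2_def)
    hence E: "\<bar>logdetK TYPE('d) t q - logdetK TYPE('d) t 0 - (2 * t - ?d) * g1 CARD('d) q\<bar>
        \<le> K / (2 * \<delta>) * g2 CARD('d) t q"
      using abs_logdetK_diff_le[where 'd='d and q=q, OF \<delta> t] unfolding K_def B_def by linarith
    show "(2*t - ?d) * g1 CARD('d) q - K / (2 * \<delta>) * g2 CARD('d) t q + logdetK TYPE('d) t 0
              \<le> logdetK TYPE('d) t q
          \<and> logdetK TYPE('d) t q
              \<le> (2*t - ?d) * g1 CARD('d) q + K / (2 * \<delta>) * g2 CARD('d) t q + logdetK TYPE('d) t 0"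
      using abs_le_D1[OF E] abs_le_D2[OF E] by (auto; linarith)
  qed
qed

lemma neg_g1_comparable:
  "\<exists>C'::real. C' > 0 \<and> (\<forall>q::nat. q \<ge> 1 \<longrightarrow>
     real q * 2 ^ (q * d) / C' \<le> - g1 d q \<and> - g1 d q \<le> C' * (real q * 2 ^ (q * d)))"
  if "d \<ge> 1"
proof (intro exI[of _ "2 / ln 2"] conjI allI impI)
  fix q :: nat assume "q \<ge> 1"
  note bounds = neg_g1_bounds[OF this \<open>d \<ge> 1\<close>]
  show "real q * 2 ^ (q * d) / (2 / ln 2) \<le> - g1 d q"
    using bounds(1) by (simp add: mult_ac)
  have "ln 2 * ln 2 \<le> (1::real) * 1"
    using ln_2_less_1 by (intro mult_mono) simp_all
  hence "ln 2 \<le> 2 / ln (2::real)" by (simp add: field_simps)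
  thus "- g1 d q \<le> 2 / ln 2 * (real q * 2 ^ (q * d))"
    using bounds(2) mult_right_mono[of "ln 2" "2 / ln 2" "real q * 2 ^ (q * d)"] by simp
qed simp

theorem proposition2p7:
  fixes \<delta> :: real
  assumes "\<delta> > 0"
  shows "(\<exists>C::real. \<forall>t q. real CARD('d) / 2 + \<delta> \<le> t \<and> t \<le> 1 / \<delta> \<and> q \<ge> 1 \<longrightarrow>
            (2*t - real CARD('d)) * g1 CARD('d) q - C * g2 CARD('d) t q + logdetK TYPE('d::finite) t 0
              \<le> logdetK TYPE('d) t q
          \<and> logdetK TYPE('d) t q
              \<le> (2*t - real CARD('d)) * g1 CARD('d) q + C * g2 CARD('d) t q + logdetK TYPE('d) t 0)
       \<and> (\<exists>C'::real. C' > 0 \<and> (\<forall>q::nat. q \<ge> 1 \<longrightarrow>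
            real q * 2 ^ (q * CARD('d)) / C' \<le> - g1 CARD('d) q
          \<and> - g1 CARD('d) q \<le> C' * (real q * 2 ^ (q * CARD('d)))))"
proof
  show "\<exists>C'::real. C' > 0 \<and> (\<forall>q::nat. q \<ge> 1 \<longrightarrow>
      real q * 2 ^ (q * CARD('d)) / C' \<le> - g1 CARD('d) q
    \<and> - g1 CARD('d) q \<le> C' * (real q * 2 ^ (q * CARD('d))))"
    by (rule neg_g1_comparable) (simp add: Suc_leI)
qed (rule logdetK_bounds[OF assms])

end
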